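(* Let $(X,Z,M_1,M_0,Y_1,Y_0)$ be random variables with $X\in\mathbb{X}\subseteq\mathbb{R}^{d_X}$, $Z\in\{0,1\}$, $M_1,M_0,Y_1,Y_0\in\mathbb{R}$; $M=ZM_1+(1-Z)M_0$, $Y=ZY_1+(1-Z)Y_0$, $U=(M_1,M_0)$. Assume (A1) $Z\perp\!\!\!\perp(M_0,M_1,Y_0,Y_1)\mid X$; (A2) $\mathbb{E}(Y_z\mid X,U=u)=\mathbb{E}(Y_z\mid X,M_z=m_z)$ for all $z\in\{0,1\}$, $u=(m_1,m_0)\in\mathbb{R}^2$; (A3) $e_u(x)=c_\rho\{F(M_1=m_1\mid X=x),F(M_0=m_0\mid X=x)\}\prod_{z}f(M_z=m_z\mid X=x)$ for all $x$, $u=(m_1,m_0)$. Given $u^*\in\mathbb{R}^2$, a kernel $\mathcal{K}$ and a bandwidth $h>0$, the local principal causal effect is identified as $$\tau_{u^*}=\frac{\mathbb{E}\Big[\int_{\mathbb{R}^2}\{\mu_1(X,m_1)-\mu_0(X,m_0)\}e_u(X)k_{u^*}(u)\,du\Big]}{\mathbb{E}\Big[\int_{\mathbb{R}^2}e_u(X)k_{u^*}(u)\,du\Big]},$$ where $e_u(X)=c_\rho\{F_{1m_1}(X),F_{0m_0}(X)\}\prod_{z\in\{0,1\}}f_{zm_z}(X)$ for $u=(m_1,m_0)$.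
   Context: $\mu_z(x,m)=\mathbb{E}(Y\mid X=x,Z=z,M=m)$; $e_u(x)=f(U=u\mid X=x)$ (conditional density of $U$ given $X$); $f_{zm}(x)=f(M=m\mid X=x,Z=z)$, $F_{zm}(x)=\mathbb{P}(M\le m\mid X=x,Z=z)$; $c_\rho$ is a specified bivariate copula density with specified parameter $\rho$; $F(M_z=\cdot\mid X=x)$, $f(M_z=\cdot\mid X=x)$ are conditional CDF/density of $M_z$ given $X=x$. For $u^*=(m_1^*,m_0^* )$, $k_{u^*}(u)=h^{-2}\mathcal{K}\{h^{-1}(m_1-m_1^* ),h^{-1}(m_0-m_0^* )\}$, and $\tau_{u^*}=\mathbb{E}[\{\mu_1(X,M_1)-\mu_0(X,M_0)\}k_{u^*}(U)]/\mathbb{E}\{k_{u^*}(U)\}$. *)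

theory Defs
  imports "HOL-Probability.Probability"
begin

definition cond_exp_version ::
  "'a measure \<Rightarrow> ('a \<Rightarrow> 'b::topological_space) \<Rightarrow> ('a \<Rightarrow> real) \<Rightarrow> ('b \<Rightarrow> real) \<Rightarrow> bool" where
  "cond_exp_version P V Y g \<longleftrightarrow>
     V \<in> measurable P borel \<and> g \<in> borel_measurable borel \<and>
     integrable P (\<lambda>\<omega>. g (V \<omega>)) \<and>
     (\<forall>S \<in> sets borel. (\<integral>\<omega>. indicator S (V \<omega>) * Y \<omega> \<partial>P) = (\<integral>\<omega>. indicator S (V \<omega>) * g (V \<omega>) \<partial>P))"

text \<open>f is a version of the conditional (Lebesgue) density of W given V:
  f v w = f(W = w | V = v).\<close>
definition cond_density_version ::
  "'a measure \<Rightarrow> ('a \<Rightarrow> 'b::topological_space) \<Rightarrow> ('a \<Rightarrow> 'w::euclidean_space) \<Rightarrow> ('b \<Rightarrow> 'w \<Rightarrow> real) \<Rightarrow> bool" where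
  "cond_density_version P V W f \<longleftrightarrow>
     V \<in> measurable P borel \<and> W \<in> borel_measurable P \<and>
     (\<lambda>(v, w). f v w) \<in> borel_measurable borel \<and> (\<forall>v w. 0 \<le> f v w) \<and>
     (\<forall>A \<in> sets borel. \<forall>B \<in> sets borel.
        emeasure P {\<omega> \<in> space P. V \<omega> \<in> A \<and> W \<omega> \<in> B} =
        (\<integral>\<^sup>+ v. indicator A v * (\<integral>\<^sup>+ w. indicator B w * ennreal (f v w) \<partial>lborel) \<partial>distr P borel V))"

definition cond_cdf :: "('b \<Rightarrow> real \<Rightarrow> real) \<Rightarrow> 'b \<Rightarrow> real \<Rightarrow> real" where
  "cond_cdf f v m = (\<integral> t. indicator {..m} t * f v t \<partial>lborel)"

definition cond_indep ::
  "'a measure \<Rightarrow> ('a \<Rightarrow> 'x::topological_space) \<Rightarrow> ('a \<Rightarrow> 'z::topological_space) \<Rightarrow> ('a \<Rightarrow> 'w::topological_space) \<Rightarrow> bool" where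
  "cond_indep P X Z W \<longleftrightarrow>
     (\<forall>C \<in> sets (borel :: 'z measure). \<forall>B \<in> sets (borel :: 'w measure).
        AE \<omega> in P.
          real_cond_exp P (vimage_algebra (space P) X borel)
             (\<lambda>\<eta>. indicator C (Z \<eta>) * indicator B (W \<eta>)) \<omega> =
          real_cond_exp P (vimage_algebra (space P) X borel) (\<lambda>\<eta>. indicator C (Z \<eta>)) \<omega> *
          real_cond_exp P (vimage_algebra (space P) X borel) (\<lambda>\<eta>. indicator B (W \<eta>)) \<omega>)"

definition copula_density :: "(real \<Rightarrow> real \<Rightarrow> real) \<Rightarrow> bool" where
  "copula_density c \<longleftrightarrow>
     (\<lambda>(s, t). c s t) \<in> borel_measurable borel \<and> (\<forall>s t. 0 \<le> c s t) \<and>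
     (\<forall>a \<in> {0..1}.
        (\<integral>\<^sup>+ p. indicator ({0..a} \<times> {0..1}) p * ennreal (c (fst p) (snd p)) \<partial>(lborel :: (real \<times> real) measure)) = ennreal a \<and>
        (\<integral>\<^sup>+ p. indicator ({0..1} \<times> {0..a}) p * ennreal (c (fst p) (snd p)) \<partial>(lborel :: (real \<times> real) measure)) = ennreal a)"

definition kernel2 :: "(real \<Rightarrow> real \<Rightarrow> real) \<Rightarrow> bool" where
  "kernel2 K \<longleftrightarrow>
     (\<lambda>(a, b). K a b) \<in> borel_measurable borel \<and> (\<exists>B. \<forall>a b. \<bar>K a b\<bar> \<le> B) \<and>
     integrable (lborel :: (real \<times> real) measure) (\<lambda>p. K (fst p) (snd p)) \<and>
     (\<integral> p. K (fst p) (snd p) \<partial>(lborel :: (real \<times> real) measure)) = 1"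

definition kern_u :: "(real \<Rightarrow> real \<Rightarrow> real) \<Rightarrow> real \<Rightarrow> real \<times> real \<Rightarrow> real \<times> real \<Rightarrow> real" where
  "kern_u K h ustar u = K ((fst u - fst ustar) / h) ((snd u - snd ustar) / h) / h\<^sup>2"

definition copula_e ::
  "(real \<Rightarrow> real \<Rightarrow> real) \<Rightarrow> ('x \<Rightarrow> real \<Rightarrow> real) \<Rightarrow> ('x \<Rightarrow> real \<Rightarrow> real) \<Rightarrow> 'x \<Rightarrow> real \<times> real \<Rightarrow> real" where
  "copula_e c f1 f0 x u = c (cond_cdf f1 x (fst u)) (cond_cdf f0 x (snd u)) * (f1 x (fst u) * f0 x (snd u))"

end

theory Submission
  imports Defs
begin

text \<open>The left-hand side is an expectation of functions of \<open>(X, M\<^sub>1, M\<^sub>0)\<close>, so it equals the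
  same expectation with \<open>(M\<^sub>1, M\<^sub>0)\<close> integrated against its conditional density \<open>e\<close> given \<open>X\<close>,
  which by (A3) is the copula density built from the conditional densities of \<open>M\<^sub>1\<close> and \<open>M\<^sub>0\<close>
  given \<open>X\<close>. It remains to see that the conditional density of \<open>M\<^sub>z\<close> given \<open>X\<close> is that of the
  observed mediator given \<open>(X, Z = z)\<close>, and that \<open>mu (X, z, M\<^sub>z) = E(Y\<^sub>z | X, M\<^sub>z)\<close>, which makes the
  numerator integrable. Both follow from one observation: by (A1), weighting \<open>P\<close> with the arm
  indicator \<open>[Z = z]\<close> or with the propensity \<open>P(Z = z | X)\<close> gives the same law of
  \<open>(X, M\<^sub>z, Y\<^sub>z)\<close>. Under the first weight the observed \<open>M\<close> and \<open>Y\<close> are \<open>M\<^sub>z\<close> and \<open>Y\<^sub>z\<close>, so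
  observed and potential quantities agree under the second weight, and by overlap the propensity
  is positive and can be cancelled.\<close>

lemma borel_measurable_fst_comp [measurable (raw)]:
  fixes f :: "'a \<Rightarrow> 'b::second_countable_topology \<times> 'c::second_countable_topology"
  assumes "f \<in> borel_measurable M"
  shows "(\<lambda>x. fst (f x)) \<in> borel_measurable M"
  by (rule measurable_compose[OF assms borel_measurable_continuous_onI]) (intro continuous_intros)

lemma borel_measurable_snd_comp [measurable (raw)]:
  fixes f :: "'a \<Rightarrow> 'b::second_countable_topology \<times> 'c::second_countable_topology"
  assumes "f \<in> borel_measurable M"
  shows "(\<lambda>x. snd (f x)) \<in> borel_measurable M"
  by (rule measurable_compose[OF assms borel_measurable_continuous_onI]) (intro continuous_intros)

lemma integrable_mult_bounded:
  fixes f g :: "'a \<Rightarrow> real"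
  assumes "integrable M f" "g \<in> borel_measurable M" "\<And>x. x \<in> space M \<Longrightarrow> \<bar>g x\<bar> \<le> C"
  shows "integrable M (\<lambda>x. g x * f x)"
proof (rule Bochner_Integration.integrable_bound)
  show "integrable M (\<lambda>x. C * f x)" using assms(1) by simp
  have "\<bar>g x\<bar> * \<bar>f x\<bar> \<le> \<bar>C\<bar> * \<bar>f x\<bar>" if "x \<in> space M" for x
    using assms(3)[OF that] by (intro mult_right_mono) auto
  then show "AE x in M. norm (g x * f x) \<le> norm (C * f x)"
    by (intro AE_I2) (simp add: abs_mult)
qed (use assms in measurable)

lemma measure_eqI_rectangles:
  fixes M N :: "('b::second_countable_topology \<times> 'c::second_countable_topology) measure"
  assumes M: "sets M = sets borel" and N: "sets N = sets borel" and fin: "finite_measure M"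
    and eq: "\<And>A B. A \<in> sets borel \<Longrightarrow> B \<in> sets borel \<Longrightarrow> emeasure M (A \<times> B) = emeasure N (A \<times> B)"
  shows "M = N"
proof (rule measure_eqI_generator_eq[OF Int_stable_pair_measure_generator[of "borel::'b measure" "borel::'c measure"]])
  let ?E = "{a \<times> b |a b. a \<in> sets (borel::'b measure) \<and> b \<in> sets (borel::'c measure)}"
  show "?E \<subseteq> Pow (space borel \<times> space borel)" by auto
  show "sets M = sigma_sets (space borel \<times> space borel) ?E" "sets N = sigma_sets (space borel \<times> space borel) ?E"
    using M N by (simp_all add: borel_prod[symmetric] sets_pair_measure)
  show "\<And>X. X \<in> ?E \<Longrightarrow> emeasure M X = emeasure N X" using eq by auto
  show "range (\<lambda>i. UNIV) \<subseteq> ?E" by (auto intro!: exI[where x=UNIV])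
  show "(\<Union>i. UNIV) = space borel \<times> space borel" by auto
  have "space M = UNIV" using sets_eq_imp_space_eq[OF M] by simp
  then show "\<And>i. emeasure M UNIV \<noteq> \<infinity>" using finite_measure.emeasure_finite[OF fin, of UNIV] by simp
qed

lemma sets_pair_lborel_borel:
  assumes "sets M = sets (borel :: 'b::second_countable_topology measure)"
  shows "sets (M \<Otimes>\<^sub>M (lborel :: 'w::euclidean_space measure)) = sets (borel :: ('b \<times> 'w) measure)"
  using assms by (metis borel_prod sets_lborel sets_pair_measure_cong)

lemma borel_measurable_pair_lborel:
  fixes F :: "'b::second_countable_topology \<times> 'w::euclidean_space \<Rightarrow> 'c::topological_space"
  assumes "F \<in> borel_measurable borel" "sets M = sets borel"
  shows "F \<in> borel_measurable (M \<Otimes>\<^sub>M lborel)"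
  using assms by (simp add: measurable_cong_sets[OF sets_pair_lborel_borel[OF assms(2)] refl])

lemma borel_measurable_slice:
  fixes F :: "'b::second_countable_topology \<times> 'w::euclidean_space \<Rightarrow> 'c::topological_space"
  assumes "F \<in> borel_measurable borel"
  shows "(\<lambda>w. F (x, w)) \<in> borel_measurable lborel"
  using measurable_Pair2[OF borel_measurable_pair_lborel[OF assms refl], of x] by simp

lemma borel_measurable_integral_slice:
  fixes F :: "'b::second_countable_topology \<times> 'w::euclidean_space \<Rightarrow> real"
  assumes "F \<in> borel_measurable borel"
  shows "(\<lambda>x. \<integral>w. F (x, w) \<partial>lborel) \<in> borel_measurable borel"
  using lborel.borel_measurable_lebesgue_integral[of "\<lambda>x w. F (x, w)" borel]
    borel_measurable_pair_lborel[OF assms refl] by simp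

lemma borel_measurable_nn_integral_slice:
  fixes F :: "'b::second_countable_topology \<times> 'w::euclidean_space \<Rightarrow> ennreal"
  assumes "F \<in> borel_measurable borel"
  shows "(\<lambda>x. \<integral>\<^sup>+w. F (x, w) \<partial>lborel) \<in> borel_measurable borel"
  using lborel.borel_measurable_nn_integral_fst[of F borel]
    borel_measurable_pair_lborel[OF assms refl] by simp

lemma borel_measurable_fix_snd_arg:
  fixes f :: "'b::second_countable_topology \<times> 'c::second_countable_topology \<Rightarrow> 'd::second_countable_topology \<Rightarrow> 'e::topological_space"
  assumes "(\<lambda>p. f (fst p) (snd p)) \<in> borel_measurable borel"
  shows "(\<lambda>t. f (fst t, c) (snd t)) \<in> borel_measurable borel"
  using measurable_compose[OF _ assms, of "\<lambda>t. ((fst t, c), snd t)"] by simp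

section \<open>Conditional densities\<close>

lemma cond_density_versionD:
  assumes "cond_density_version P V W f"
  shows "V \<in> measurable P borel" "W \<in> borel_measurable P"
    and "(\<lambda>p. f (fst p) (snd p)) \<in> borel_measurable borel" "0 \<le> f v w"
  using assms by (auto simp: cond_density_version_def case_prod_beta')

lemma emeasure_density_pair_lborel:
  fixes g :: "'b::second_countable_topology \<times> 'w::euclidean_space \<Rightarrow> ennreal"
  assumes M: "sets M = sets borel" and g: "g \<in> borel_measurable borel" and S: "S \<in> sets borel"
  shows "emeasure (density (M \<Otimes>\<^sub>M lborel) g) S = (\<integral>\<^sup>+x. (\<integral>\<^sup>+w. g (x, w) * indicator S (x, w) \<partial>lborel) \<partial>M)"
proof -
  have "emeasure (density (M \<Otimes>\<^sub>M lborel) g) S = (\<integral>\<^sup>+v. g v * indicator S v \<partial>(M \<Otimes>\<^sub>M lborel))"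
    by (rule emeasure_density[OF borel_measurable_pair_lborel[OF g M]])
      (unfold sets_pair_lborel_borel[OF M], rule S)
  also have "\<dots> = (\<integral>\<^sup>+x. (\<integral>\<^sup>+w. g (x, w) * indicator S (x, w) \<partial>lborel) \<partial>M)"
    by (intro lborel.nn_integral_fst[symmetric] borel_measurable_pair_lborel[OF _ M]
        borel_measurable_times_ennreal g borel_measurable_indicator S)
  finally show ?thesis .
qed

lemma distr_eq_density_cond_density:
  fixes V :: "'a \<Rightarrow> 'b::second_countable_topology" and W :: "'a \<Rightarrow> 'w::euclidean_space"
  assumes P: "prob_space P" and cd: "cond_density_version P V W f"
  shows "distr P borel (\<lambda>\<omega>. (V \<omega>, W \<omega>)) =
    density (distr P borel V \<Otimes>\<^sub>M lborel) (\<lambda>p. ennreal (f (fst p) (snd p)))"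
proof (rule measure_eqI_rectangles)
  interpret prob_space P by fact
  note [measurable] = cond_density_versionD(1-3)[OF cd]
  let ?L = "distr P borel V"
  have [measurable]: "(\<lambda>p. f (fst p) (snd p)) \<in> borel_measurable (?L \<Otimes>\<^sub>M lborel)"
    by (rule borel_measurable_pair_lborel) simp_all
  show "sets (distr P borel (\<lambda>\<omega>. (V \<omega>, W \<omega>))) = sets borel" by simp
  show "sets (density (?L \<Otimes>\<^sub>M lborel) (\<lambda>p. ennreal (f (fst p) (snd p)))) = sets borel"
    using sets_pair_lborel_borel[of ?L] by simp
  show "finite_measure (distr P borel (\<lambda>\<omega>. (V \<omega>, W \<omega>)))"
    by (rule finite_measure_distr) simp
  fix A :: "'b set" and B :: "'w set" assume [measurable]: "A \<in> sets borel" "B \<in> sets borel"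
  have "emeasure (distr P borel (\<lambda>\<omega>. (V \<omega>, W \<omega>))) (A \<times> B) = emeasure P {\<omega> \<in> space P. V \<omega> \<in> A \<and> W \<omega> \<in> B}"
    by (subst emeasure_distr) (auto intro!: arg_cong[where f="emeasure P"] simp: borel_prod[symmetric])
  also have "\<dots> = (\<integral>\<^sup>+ v. indicator A v * (\<integral>\<^sup>+ w. indicator B w * ennreal (f v w) \<partial>lborel) \<partial>?L)"
    using cd by (simp add: cond_density_version_def)
  also have "\<dots> = (\<integral>\<^sup>+ v. (\<integral>\<^sup>+ w. ennreal (f v w) * indicator (A \<times> B) (v, w) \<partial>lborel) \<partial>?L)"
  proof (intro nn_integral_cong)
    fix v
    have "(\<lambda>w. indicator B w * ennreal (f v w)) \<in> borel_measurable lborel"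
      using borel_measurable_slice[of "\<lambda>p. indicator B (snd p) * ennreal (f (fst p) (snd p))" v] by simp
    then show "indicator A v * (\<integral>\<^sup>+ w. indicator B w * ennreal (f v w) \<partial>lborel) =
        (\<integral>\<^sup>+ w. ennreal (f v w) * indicator (A \<times> B) (v, w) \<partial>lborel)"
      by (subst nn_integral_cmult[symmetric]) (simp_all add: indicator_times mult_ac)
  qed
  also have "\<dots> = emeasure (density (?L \<Otimes>\<^sub>M lborel) (\<lambda>p. ennreal (f (fst p) (snd p)))) (A \<times> B)"
    by (subst emeasure_density_pair_lborel) (simp_all add: borel_prod[symmetric])
  finally show "emeasure (distr P borel (\<lambda>\<omega>. (V \<omega>, W \<omega>))) (A \<times> B) =
      emeasure (density (?L \<Otimes>\<^sub>M lborel) (\<lambda>p. ennreal (f (fst p) (snd p)))) (A \<times> B)" .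
qed

lemma nn_integral_cond_density:
  fixes V :: "'a \<Rightarrow> 'b::second_countable_topology" and W :: "'a \<Rightarrow> 'w::euclidean_space"
    and F :: "'b \<times> 'w \<Rightarrow> ennreal"
  assumes P: "prob_space P" and cd: "cond_density_version P V W f"
    and F: "F \<in> borel_measurable borel"
  shows "(\<integral>\<^sup>+\<omega>. F (V \<omega>, W \<omega>) \<partial>P) = (\<integral>\<^sup>+\<omega>. (\<integral>\<^sup>+w. ennreal (f (V \<omega>) w) * F (V \<omega>, w) \<partial>lborel) \<partial>P)"
proof -
  interpret prob_space P by fact
  note [measurable] = cond_density_versionD(1-3)[OF cd] F
  let ?L = "distr P borel V"
  have G: "(\<lambda>p. ennreal (f (fst p) (snd p)) * F p) \<in> borel_measurable borel" by measurable
  have "(\<integral>\<^sup>+\<omega>. F (V \<omega>, W \<omega>) \<partial>P) = integral\<^sup>N (distr P borel (\<lambda>\<omega>. (V \<omega>, W \<omega>))) F"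
    by (rule nn_integral_distr[symmetric]) simp_all
  also have "\<dots> = integral\<^sup>N (?L \<Otimes>\<^sub>M lborel) (\<lambda>p. ennreal (f (fst p) (snd p)) * F p)"
    unfolding distr_eq_density_cond_density[OF P cd]
    by (rule nn_integral_density) (simp_all add: borel_measurable_pair_lborel)
  also have "\<dots> = (\<integral>\<^sup>+v. (\<integral>\<^sup>+w. ennreal (f v w) * F (v, w) \<partial>lborel) \<partial>?L)"
    using lborel.nn_integral_fst[OF borel_measurable_pair_lborel[OF G]] by simp
  also have "\<dots> = (\<integral>\<^sup>+\<omega>. (\<integral>\<^sup>+w. ennreal (f (V \<omega>) w) * F (V \<omega>, w) \<partial>lborel) \<partial>P)"
    using borel_measurable_nn_integral_slice[OF G] by (subst nn_integral_distr) simp_all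
  finally show ?thesis .
qed

lemma integral_cond_density:
  fixes V :: "'a \<Rightarrow> 'b::second_countable_topology" and W :: "'a \<Rightarrow> 'w::euclidean_space"
    and F :: "'b \<times> 'w \<Rightarrow> real"
  assumes P: "prob_space P" and cd: "cond_density_version P V W f"
    and F: "F \<in> borel_measurable borel" and int: "integrable P (\<lambda>\<omega>. F (V \<omega>, W \<omega>))"
  shows "(\<integral>\<omega>. F (V \<omega>, W \<omega>) \<partial>P) = (\<integral>\<omega>. (\<integral>w. f (V \<omega>) w * F (V \<omega>, w) \<partial>lborel) \<partial>P)"
proof -
  interpret prob_space P by fact
  note [measurable] = cond_density_versionD(1-3)[OF cd] F
  let ?L = "distr P borel V"
  interpret L: prob_space ?L by (rule prob_space_distr) simp
  interpret PS: pair_sigma_finite ?L lborel ..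
  have G: "(\<lambda>p. f (fst p) (snd p) * F p) \<in> borel_measurable borel" by measurable
  note D = distr_eq_density_cond_density[OF P cd]
  have "integrable (distr P borel (\<lambda>\<omega>. (V \<omega>, W \<omega>))) F"
    using int by (subst integrable_distr_eq) simp_all
  then have int2: "integrable (?L \<Otimes>\<^sub>M lborel) (\<lambda>p. f (fst p) (snd p) * F p)"
    unfolding D by (subst (asm) integrable_density)
      (simp_all add: borel_measurable_pair_lborel cond_density_versionD(4)[OF cd])
  have "(\<integral>\<omega>. F (V \<omega>, W \<omega>) \<partial>P) = integral\<^sup>L (distr P borel (\<lambda>\<omega>. (V \<omega>, W \<omega>))) F"
    by (rule integral_distr[symmetric]) simp_all
  also have "\<dots> = integral\<^sup>L (?L \<Otimes>\<^sub>M lborel) (\<lambda>p. f (fst p) (snd p) * F p)"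
    unfolding D by (subst integral_density)
      (simp_all add: borel_measurable_pair_lborel cond_density_versionD(4)[OF cd])
  also have "\<dots> = (\<integral>v. (\<integral>w. f v w * F (v, w) \<partial>lborel) \<partial>?L)"
    using PS.integral_fst'[OF int2] by simp
  also have "\<dots> = (\<integral>\<omega>. (\<integral>w. f (V \<omega>) w * F (V \<omega>, w) \<partial>lborel) \<partial>P)"
    using borel_measurable_integral_slice[OF G] by (subst integral_distr) simp_all
  finally show ?thesis .
qed

lemma integral_cond_density_AE_cong:
  fixes V :: "'a \<Rightarrow> 'b::second_countable_topology" and W :: "'a \<Rightarrow> 'w::euclidean_space"
    and F :: "'b \<times> 'w \<Rightarrow> real"
  assumes P: "prob_space P" and cd: "cond_density_version P V W f"
    and F: "F \<in> borel_measurable borel" and int: "integrable P (\<lambda>\<omega>. F (V \<omega>, W \<omega>))"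
    and g: "(\<lambda>p. g (fst p) (snd p)) \<in> borel_measurable borel"
    and ae: "AE \<omega> in P. AE w in lborel. g (V \<omega>) w = f (V \<omega>) w"
  shows "(\<integral>\<omega>. F (V \<omega>, W \<omega>) \<partial>P) = (\<integral>\<omega>. (\<integral>w. g (V \<omega>) w * F (V \<omega>, w) \<partial>lborel) \<partial>P)"
  unfolding integral_cond_density[OF P cd F int]
proof (rule integral_cong_AE)
  note [measurable] = cond_density_versionD(1-3)[OF cd] F g
  have Gf: "(\<lambda>p. f (fst p) (snd p) * F p) \<in> borel_measurable borel"
    and Gg: "(\<lambda>p. g (fst p) (snd p) * F p) \<in> borel_measurable borel" by measurable measurable
  show "(\<lambda>\<omega>. \<integral>w. f (V \<omega>) w * F (V \<omega>, w) \<partial>lborel) \<in> borel_measurable P"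
    using measurable_compose[OF cond_density_versionD(1)[OF cd] borel_measurable_integral_slice[OF Gf]] by simp
  show "(\<lambda>\<omega>. \<integral>w. g (V \<omega>) w * F (V \<omega>, w) \<partial>lborel) \<in> borel_measurable P"
    using measurable_compose[OF cond_density_versionD(1)[OF cd] borel_measurable_integral_slice[OF Gg]] by simp
  show "AE \<omega> in P. (\<integral>w. f (V \<omega>) w * F (V \<omega>, w) \<partial>lborel) = (\<integral>w. g (V \<omega>) w * F (V \<omega>, w) \<partial>lborel)"
    using ae
  proof eventually_elim
    case (elim \<omega>)
    show ?case
      using borel_measurable_slice[OF Gf, of "V \<omega>"] borel_measurable_slice[OF Gg, of "V \<omega>"] elim
      by (intro integral_cong_AE) (auto elim!: AE_mp)
  qed
qed

lemma integral_ratio_cond_density_AE_cong: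
  fixes X :: "'a \<Rightarrow> 'b::second_countable_topology" and U :: "'a \<Rightarrow> 'w::euclidean_space"
    and G :: "'b \<times> 'w \<Rightarrow> real" and k :: "'w \<Rightarrow> real"
  assumes P: "prob_space P" and cd: "cond_density_version P X U e"
    and g: "(\<lambda>p. g (fst p) (snd p)) \<in> borel_measurable borel"
    and ae: "AE \<omega> in P. AE u in lborel. g (X \<omega>) u = e (X \<omega>) u"
    and [measurable]: "G \<in> borel_measurable borel" and G_int: "integrable P (\<lambda>\<omega>. G (X \<omega>, U \<omega>))"
    and [measurable]: "k \<in> borel_measurable borel" and k: "\<And>u. \<bar>k u\<bar> \<le> C"
  shows "(\<integral>\<omega>. G (X \<omega>, U \<omega>) * k (U \<omega>) \<partial>P) / (\<integral>\<omega>. k (U \<omega>) \<partial>P) =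
    (\<integral>\<omega>. (\<integral>u. G (X \<omega>, u) * g (X \<omega>) u * k u \<partial>lborel) \<partial>P) /
    (\<integral>\<omega>. (\<integral>u. g (X \<omega>) u * k u \<partial>lborel) \<partial>P)"
proof -
  interpret prob_space P by fact
  note [measurable] = cond_density_versionD(1,2)[OF cd]
  have "integrable P (\<lambda>\<omega>. k (U \<omega>) * G (X \<omega>, U \<omega>))"
    using k by (intro integrable_mult_bounded[OF G_int]) simp_all
  then have "(\<integral>\<omega>. G (X \<omega>, U \<omega>) * k (U \<omega>) \<partial>P) = (\<integral>\<omega>. (\<integral>u. g (X \<omega>) u * (k u * G (X \<omega>, u)) \<partial>lborel) \<partial>P)"
    using integral_cond_density_AE_cong[OF P cd _ _ g ae, of "\<lambda>t. k (snd t) * G t"]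
    by (simp add: mult.commute)
  moreover have "(\<integral>\<omega>. k (U \<omega>) \<partial>P) = (\<integral>\<omega>. (\<integral>u. g (X \<omega>) u * k u \<partial>lborel) \<partial>P)"
    using integral_cond_density_AE_cong[OF P cd _ _ g ae, of "\<lambda>t. k (snd t)"] k
    by (simp add: integrable_const_bound[where B=C])
  ultimately show ?thesis
    by (simp add: mult_ac)
qed

section \<open>Reweighted laws\<close>

text \<open>For \<open>a = [Z = z]\<close> it is the law of \<open>V\<close>
  on arm \<open>z\<close>; unconfoundedness says that for \<open>V = (X, M\<^sub>z, Y\<^sub>z)\<close> it does not change when \<open>a\<close> is
  replaced by the propensity \<open>P(Z = z | X)\<close>.\<close>

definition reweighted_distr :: "'a measure \<Rightarrow> ('a \<Rightarrow> real) \<Rightarrow> ('a \<Rightarrow> 'b::topological_space) \<Rightarrow> 'b measure" where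
  "reweighted_distr P a V = distr (density P (\<lambda>\<omega>. ennreal (a \<omega>))) borel V"

lemma sets_reweighted_distr [simp]: "sets (reweighted_distr P a V) = sets borel"
  and space_reweighted_distr [simp]: "space (reweighted_distr P a V) = UNIV"
  by (simp_all add: reweighted_distr_def)

lemma nn_integral_reweighted_distr:
  assumes "V \<in> measurable P borel" "a \<in> borel_measurable P" "h \<in> borel_measurable borel"
  shows "(\<integral>\<^sup>+y. h y \<partial>reweighted_distr P a V) = (\<integral>\<^sup>+\<omega>. ennreal (a \<omega>) * h (V \<omega>) \<partial>P)"
  using assms by (simp add: reweighted_distr_def nn_integral_distr nn_integral_density)

lemma emeasure_reweighted_distr:
  assumes "V \<in> measurable P borel" "a \<in> borel_measurable P" "S \<in> sets borel"
  shows "emeasure (reweighted_distr P a V) S = (\<integral>\<^sup>+\<omega>. ennreal (a \<omega>) * indicator S (V \<omega>) \<partial>P)"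
  using assms nn_integral_reweighted_distr[OF assms(1,2) borel_measurable_indicator[OF assms(3)]]
  by (simp flip: nn_integral_indicator)

lemma
  fixes h :: "'b::topological_space \<Rightarrow> real"
  assumes "V \<in> measurable P borel" "a \<in> borel_measurable P" "AE \<omega> in P. 0 \<le> a \<omega>"
    and "h \<in> borel_measurable borel"
  shows integral_reweighted_distr: "(\<integral>y. h y \<partial>reweighted_distr P a V) = (\<integral>\<omega>. a \<omega> * h (V \<omega>) \<partial>P)"
    and integrable_reweighted_distr_iff:
      "integrable (reweighted_distr P a V) h \<longleftrightarrow> integrable P (\<lambda>\<omega>. a \<omega> * h (V \<omega>))"
  using assms by (simp_all add: reweighted_distr_def integral_distr integral_density
      integrable_distr_eq integrable_density)

lemma reweighted_distr_comp:
  assumes "reweighted_distr P a V = reweighted_distr P b V"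
    and "V \<in> measurable P borel" "g \<in> borel_measurable borel"
  shows "reweighted_distr P a (\<lambda>\<omega>. g (V \<omega>)) = reweighted_distr P b (\<lambda>\<omega>. g (V \<omega>))"
  using arg_cong[OF assms(1), of "\<lambda>M. distr M borel g"] assms(2,3)
  by (simp add: reweighted_distr_def distr_distr comp_def)

lemma reweighted_distr_cong:
  assumes "V \<in> measurable P borel" "V' \<in> measurable P borel" "a \<in> borel_measurable P"
    and "\<And>\<omega>. \<omega> \<in> space P \<Longrightarrow> a \<omega> \<noteq> 0 \<Longrightarrow> V \<omega> = V' \<omega>"
  shows "reweighted_distr P a V = reweighted_distr P a V'"
proof (rule measure_eqI)
  fix S assume "S \<in> sets (reweighted_distr P a V)"
  then have "S \<in> sets borel" by simp
  then show "emeasure (reweighted_distr P a V) S = emeasure (reweighted_distr P a V') S"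
    using assms by (simp add: emeasure_reweighted_distr) (intro nn_integral_cong; force)
qed simp

lemma AE_reweighted_distrD:
  assumes "AE y in reweighted_distr P a V. R y" "V \<in> measurable P borel" "a \<in> borel_measurable P"
  shows "AE \<omega> in P. 0 < a \<omega> \<longrightarrow> R (V \<omega>)"
proof -
  have "AE y in distr (density P (\<lambda>\<omega>. ennreal (a \<omega>))) borel V. R y"
    using assms(1) unfolding reweighted_distr_def .
  from AE_distrD[OF _ this] have "AE \<omega> in density P (\<lambda>\<omega>. ennreal (a \<omega>)). R (V \<omega>)"
    using assms(2) by simp
  then show ?thesis using assms(3) by (subst (asm) AE_density) auto
qed

lemma finite_measure_reweighted_distr:
  assumes "V \<in> measurable P borel" "integrable P a" "AE \<omega> in P. 0 \<le> a \<omega>"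
  shows "finite_measure (reweighted_distr P a V)"
proof (rule finite_measureI)
  have "emeasure (reweighted_distr P a V) UNIV = ennreal (\<integral>\<omega>. a \<omega> \<partial>P)"
    using assms by (simp add: emeasure_reweighted_distr nn_integral_eq_integral)
  then show "emeasure (reweighted_distr P a V) (space (reweighted_distr P a V)) \<noteq> \<infinity>" by simp
qed

lemma absolutely_continuous_reweighted_distr:
  assumes [measurable]: "V \<in> measurable P borel" "a \<in> borel_measurable P"
  shows "absolutely_continuous (distr P borel V) (reweighted_distr P a V)"
  unfolding absolutely_continuous_def
proof
  fix A assume "A \<in> null_sets (distr P borel V)"
  then have A: "A \<in> sets borel" and "V -` A \<inter> space P \<in> null_sets P"
    by (auto simp: null_sets_def emeasure_distr)
  then have "emeasure (density P (\<lambda>\<omega>. ennreal (a \<omega>))) (V -` A \<inter> space P) = 0"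
    using absolutely_continuousD[OF absolutely_continuousI_density[of "\<lambda>\<omega>. ennreal (a \<omega>)" P]]
    by (simp add: null_sets_def)
  then show "A \<in> null_sets (reweighted_distr P a V)"
    using A by (simp add: null_sets_def reweighted_distr_def emeasure_distr)
qed

lemma reweighted_distr_eqI_rectangles:
  fixes X :: "'a \<Rightarrow> 'b::second_countable_topology" and W :: "'a \<Rightarrow> 'c::second_countable_topology"
  assumes [measurable]: "X \<in> measurable P borel" "W \<in> measurable P borel"
    and a: "integrable P a" "AE \<omega> in P. 0 \<le> a \<omega>" and b: "integrable P b" "AE \<omega> in P. 0 \<le> b \<omega>"
    and eq: "\<And>A B. A \<in> sets borel \<Longrightarrow> B \<in> sets borel \<Longrightarrow>
       (\<integral>\<omega>. a \<omega> * (indicator A (X \<omega>) * indicator B (W \<omega>)) \<partial>P) =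
       (\<integral>\<omega>. b \<omega> * (indicator A (X \<omega>) * indicator B (W \<omega>)) \<partial>P)"
  shows "reweighted_distr P a (\<lambda>\<omega>. (X \<omega>, W \<omega>)) = reweighted_distr P b (\<lambda>\<omega>. (X \<omega>, W \<omega>))"
proof -
  have rect: "emeasure (reweighted_distr P c (\<lambda>\<omega>. (X \<omega>, W \<omega>))) (A \<times> B) =
      ennreal (\<integral>\<omega>. c \<omega> * (indicator A (X \<omega>) * indicator B (W \<omega>)) \<partial>P)"
    if c: "integrable P c" "AE \<omega> in P. 0 \<le> c \<omega>" and [measurable]: "A \<in> sets borel" "B \<in> sets borel"
    for c A B
  proof -
    have [measurable]: "c \<in> borel_measurable P" using c by auto
    have "A \<times> B \<in> sets (borel :: ('b \<times> 'c) measure)" by (simp add: borel_prod[symmetric])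
    then have "emeasure (reweighted_distr P c (\<lambda>\<omega>. (X \<omega>, W \<omega>))) (A \<times> B) =
        (\<integral>\<^sup>+\<omega>. ennreal (c \<omega>) * indicator (A \<times> B) (X \<omega>, W \<omega>) \<partial>P)"
      by (rule emeasure_reweighted_distr[rotated 2]) simp_all
    also have "\<dots> = (\<integral>\<^sup>+\<omega>. ennreal (c \<omega> * (indicator A (X \<omega>) * indicator B (W \<omega>))) \<partial>P)"
      by (intro nn_integral_cong) (simp add: indicator_def)
    also have "\<dots> = ennreal (\<integral>\<omega>. c \<omega> * (indicator A (X \<omega>) * indicator B (W \<omega>)) \<partial>P)"
    proof (rule nn_integral_eq_integral)
      have "integrable P (\<lambda>\<omega>. (indicator A (X \<omega>) * indicator B (W \<omega>)) * c \<omega>)"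
        by (rule integrable_mult_bounded[OF c(1), where C=1]) (auto simp: indicator_def)
      then show "integrable P (\<lambda>\<omega>. c \<omega> * (indicator A (X \<omega>) * indicator B (W \<omega>)))"
        by (simp add: mult.commute)
      show "AE \<omega> in P. 0 \<le> c \<omega> * (indicator A (X \<omega>) * indicator B (W \<omega>))"
        using c(2) by eventually_elim simp
    qed
    finally show ?thesis .
  qed
  show ?thesis
  proof (rule measure_eqI_rectangles)
    show "finite_measure (reweighted_distr P a (\<lambda>\<omega>. (X \<omega>, W \<omega>)))"
      using a by (intro finite_measure_reweighted_distr) simp_all
  qed (use rect[OF a] rect[OF b] eq in simp_all)
qed

lemma reweighted_distr_cond_density:
  fixes V :: "'a \<Rightarrow> 'b::second_countable_topology" and W :: "'a \<Rightarrow> 'w::euclidean_space"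
  assumes P: "prob_space P" and cd: "cond_density_version P V W f"
    and [measurable]: "a \<in> borel_measurable borel" and a: "\<And>v. 0 \<le> a v"
  shows "reweighted_distr P (\<lambda>\<omega>. a (V \<omega>)) (\<lambda>\<omega>. (V \<omega>, W \<omega>)) =
    density (distr P borel V \<Otimes>\<^sub>M lborel) (\<lambda>v. ennreal (a (fst v) * f (fst v) (snd v)))"
proof -
  note [measurable] = cond_density_versionD(1-3)[OF cd]
  let ?M = "distr P borel V \<Otimes>\<^sub>M lborel"
  have [measurable]: "(\<lambda>v. f (fst v) (snd v)) \<in> borel_measurable ?M" "(\<lambda>v. a (fst v)) \<in> borel_measurable ?M"
    by (simp_all add: borel_measurable_pair_lborel)
  have "reweighted_distr P (\<lambda>\<omega>. a (V \<omega>)) (\<lambda>\<omega>. (V \<omega>, W \<omega>)) =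
      density (distr P borel (\<lambda>\<omega>. (V \<omega>, W \<omega>))) (\<lambda>v. ennreal (a (fst v)))"
    unfolding reweighted_distr_def by (subst density_distr) simp_all
  also have "\<dots> = density ?M (\<lambda>v. ennreal (f (fst v) (snd v)) * ennreal (a (fst v)))"
    unfolding distr_eq_density_cond_density[OF P cd] by (rule density_density_eq) simp_all
  finally show ?thesis
    using a cond_density_versionD(4)[OF cd] by (simp add: ennreal_mult mult.commute)
qed

section \<open>Conditional expectations and conditional independence\<close>

lemma finite_measure_subalgebra_vimage:
  assumes "prob_space P" "X \<in> measurable P (borel :: 'b::topological_space measure)"
  shows "finite_measure_subalgebra P (vimage_algebra (space P) X borel)"
proof -
  interpret prob_space P by fact
  show ?thesis
    by unfold_locales (auto simp: subalgebra_def intro!: sets_image_in_sets[OF refl assms(2)])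
qed

lemma borel_measurable_vimage_algebra_comp:
  assumes "g \<in> borel_measurable (borel :: 'b::topological_space measure)"
  shows "(\<lambda>\<omega>. g (X \<omega>)) \<in> borel_measurable (vimage_algebra \<Omega> X (borel :: 'b measure))"
  by (rule measurable_compose[OF measurable_vimage_algebra1 assms]) simp

lemma real_cond_exp_cond_exp_version:
  assumes P: "prob_space P" and ce: "cond_exp_version P V Y g" and Y: "integrable P Y"
  shows "AE \<omega> in P. real_cond_exp P (vimage_algebra (space P) V borel) Y \<omega> = g (V \<omega>)"
proof -
  have [measurable]: "V \<in> measurable P borel" "g \<in> borel_measurable borel"
    and gi: "integrable P (\<lambda>\<omega>. g (V \<omega>))"
    and eq: "\<And>S. S \<in> sets borel \<Longrightarrow> (\<integral>\<omega>. indicator S (V \<omega>) * Y \<omega> \<partial>P) = (\<integral>\<omega>. indicator S (V \<omega>) * g (V \<omega>) \<partial>P)"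
    using ce unfolding cond_exp_version_def by auto
  interpret S: finite_measure_subalgebra P "vimage_algebra (space P) V borel"
    by (rule finite_measure_subalgebra_vimage) fact+
  have set_integral: "(\<integral>\<omega>\<in>V -` B \<inter> space P. f \<omega> \<partial>P) = (\<integral>\<omega>. indicator B (V \<omega>) * f \<omega> \<partial>P)" for B and f :: "'a \<Rightarrow> real"
    unfolding set_lebesgue_integral_def by (intro Bochner_Integration.integral_cong) (auto simp: indicator_def)
  show ?thesis
  proof (rule S.real_cond_exp_charact)
    fix A assume "A \<in> sets (vimage_algebra (space P) V borel)"
    then obtain B where "B \<in> sets borel" "A = V -` B \<inter> space P"
      by (subst (asm) sets_vimage_algebra2) auto
    then show "(\<integral>\<omega>\<in>A. Y \<omega> \<partial>P) = (\<integral>\<omega>\<in>A. g (V \<omega>) \<partial>P)"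
      using eq by (simp add: set_integral)
  qed (simp_all add: Y gi borel_measurable_vimage_algebra_comp)
qed

lemma (in sigma_finite_measure) density_RN_deriv_real:
  assumes "finite_measure N" "absolutely_continuous M N" "sets N = sets M"
  shows "density M (\<lambda>x. ennreal (enn2real (RN_deriv M N x))) = N"
proof -
  have "AE x in M. RN_deriv M N x \<noteq> \<infinity>"
    using assms by (intro RN_deriv_finite) (simp_all add: finite_measure.sigma_finite_measure)
  then have "density M (\<lambda>x. ennreal (enn2real (RN_deriv M N x))) = density M (RN_deriv M N)"
    by (intro density_cong) (auto simp: ennreal_enn2real_if)
  also have "\<dots> = N"
    using assms by (intro density_RN_deriv) simp_all
  finally show ?thesis .
qed

lemma cond_exp_version_exists:
  fixes X :: "'a \<Rightarrow> 'b::second_countable_topology"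
  assumes P: "prob_space P" and X[measurable]: "X \<in> measurable P borel"
    and Y: "integrable P Y" "AE \<omega> in P. 0 \<le> Y \<omega>"
  obtains g where "cond_exp_version P X Y g" "\<And>x. 0 \<le> g x"
proof -
  interpret prob_space P by fact
  have [measurable]: "Y \<in> borel_measurable P" using Y by auto
  let ?L = "distr P borel X" and ?N = "reweighted_distr P Y X"
  interpret L: prob_space ?L by (rule prob_space_distr) simp
  have ac: "absolutely_continuous ?L ?N"
    by (rule absolutely_continuous_reweighted_distr) simp_all
  interpret N: finite_measure ?N
    using Y by (intro finite_measure_reweighted_distr) simp_all
  define g where "g x = enn2real (RN_deriv ?L ?N x)" for x
  have [measurable]: "g \<in> borel_measurable borel"
    using borel_measurable_RN_deriv[of ?N ?L] unfolding g_def by simp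
  have g_nonneg: "\<And>x. 0 \<le> g x" unfolding g_def by simp
  have dens: "density ?L (\<lambda>x. ennreal (g x)) = ?N"
    unfolding g_def using N.finite_measure_axioms ac by (intro L.density_RN_deriv_real) simp_all
  have "integrable ?L g"
    using N.integrable_const[of "1::real"] unfolding dens[symmetric]
    by (subst (asm) integrable_density) (simp_all add: g_nonneg)
  then have gi: "integrable P (\<lambda>\<omega>. g (X \<omega>))" by (subst (asm) integrable_distr_eq) simp_all
  have "(\<integral>\<omega>. indicator S (X \<omega>) * Y \<omega> \<partial>P) = (\<integral>\<omega>. indicator S (X \<omega>) * g (X \<omega>) \<partial>P)"
    if [measurable]: "S \<in> sets borel" for S
  proof -
    have "(\<integral>\<omega>. indicator S (X \<omega>) * Y \<omega> \<partial>P) = integral\<^sup>L ?N (indicator S)"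
      using Y(2) by (subst integral_reweighted_distr) (simp_all add: mult.commute)
    also have "\<dots> = integral\<^sup>L ?L (\<lambda>x. g x * indicator S x)"
      unfolding dens[symmetric] by (subst integral_density) (simp_all add: g_nonneg)
    also have "\<dots> = (\<integral>\<omega>. indicator S (X \<omega>) * g (X \<omega>) \<partial>P)"
      by (subst integral_distr) (simp_all add: mult.commute)
    finally show ?thesis .
  qed
  then have "cond_exp_version P X Y g"
    unfolding cond_exp_version_def using gi by simp
  then show ?thesis using that g_nonneg by blast
qed

lemma cond_exp_version_integral:
  assumes P: "prob_space P" and ce: "cond_exp_version P V Y g" and Y: "integrable P Y"
    and [measurable]: "phi \<in> borel_measurable borel" and phi: "\<And>v. \<bar>phi v\<bar> \<le> C"
  shows "(\<integral>\<omega>. phi (V \<omega>) * Y \<omega> \<partial>P) = (\<integral>\<omega>. phi (V \<omega>) * g (V \<omega>) \<partial>P)"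
proof -
  interpret prob_space P by fact
  have [measurable]: "V \<in> measurable P borel" "g \<in> borel_measurable borel"
    using ce unfolding cond_exp_version_def by simp_all
  interpret S: finite_measure_subalgebra P "vimage_algebra (space P) V borel"
    by (rule finite_measure_subalgebra_vimage[OF P]) simp
  have "(\<integral>\<omega>. phi (V \<omega>) * Y \<omega> \<partial>P) =
      (\<integral>\<omega>. phi (V \<omega>) * real_cond_exp P (vimage_algebra (space P) V borel) Y \<omega> \<partial>P)"
    using Y phi by (intro S.real_cond_exp_intg(2)[symmetric] integrable_mult_bounded)
      (simp_all add: borel_measurable_vimage_algebra_comp borel_measurable_integrable)
  also have "\<dots> = (\<integral>\<omega>. phi (V \<omega>) * g (V \<omega>) \<partial>P)"
    using real_cond_exp_cond_exp_version[OF P ce Y] by (intro integral_cong_AE) auto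
  finally show ?thesis .
qed

lemma (in finite_measure_subalgebra) real_cond_exp_indicator_binary:
  assumes [measurable]: "Z \<in> borel_measurable M" and Z_bin: "\<forall>x \<in> space M. Z x \<in> {0, 1}"
  shows "AE x in M. real_cond_exp M F (\<lambda>x. indicator {1} (Z x)) x = real_cond_exp M F Z x"
    and "AE x in M. real_cond_exp M F (\<lambda>x. indicator {0} (Z x)) x = 1 - real_cond_exp M F Z x"
proof -
  have Z_int: "integrable M Z"
    by (intro integrable_const_bound[where B=1] AE_I2) (use Z_bin in auto)
  show "AE x in M. real_cond_exp M F (\<lambda>x. indicator {1} (Z x)) x = real_cond_exp M F Z x"
    using Z_bin by (intro real_cond_exp_cong AE_I2) (auto simp: indicator_def)
  have "AE x in M. real_cond_exp M F (\<lambda>x. indicator {0} (Z x)) x = real_cond_exp M F (\<lambda>x. 1 - Z x) x"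
    using Z_bin by (intro real_cond_exp_cong AE_I2) (auto simp: indicator_def)
  moreover have "AE x in M. real_cond_exp M F (\<lambda>x. 1 - Z x) x = real_cond_exp M F (\<lambda>_. 1) x - real_cond_exp M F Z x"
    using Z_int by (intro real_cond_exp_diff) simp_all
  moreover have "AE x in M. real_cond_exp M F (\<lambda>_. 1) x = 1"
    by (intro real_cond_exp_F_meas) simp_all
  ultimately show "AE x in M. real_cond_exp M F (\<lambda>x. indicator {0} (Z x)) x = 1 - real_cond_exp M F Z x"
    by eventually_elim simp
qed

lemma propensity_score:
  fixes X :: "'a \<Rightarrow> 'b::second_countable_topology" and Z :: "'a \<Rightarrow> real"
  assumes P: "prob_space P" and X_meas [measurable]: "X \<in> measurable P borel"
    and Z_meas [measurable]: "Z \<in> borel_measurable P" and Z_bin: "\<forall>\<omega> \<in> space P. Z \<omega> \<in> {0, 1}"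
    and overlap: "AE \<omega> in P. 0 < real_cond_exp P (vimage_algebra (space P) X borel) Z \<omega> \<and>
                              real_cond_exp P (vimage_algebra (space P) X borel) Z \<omega> < 1"
  obtains q where "q \<in> borel_measurable borel" "\<And>x. 0 \<le> q x \<and> q x \<le> 1"
    "AE \<omega> in P. 0 < q (X \<omega>) \<and> q (X \<omega>) < 1"
    "AE \<omega> in P. real_cond_exp P (vimage_algebra (space P) X borel) (\<lambda>\<omega>. indicator {1} (Z \<omega>)) \<omega> = q (X \<omega>)"
    "AE \<omega> in P. real_cond_exp P (vimage_algebra (space P) X borel) (\<lambda>\<omega>. indicator {0} (Z \<omega>)) \<omega> = 1 - q (X \<omega>)"
proof -
  interpret prob_space P by fact
  interpret S: finite_measure_subalgebra P "vimage_algebra (space P) X borel"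
    by (rule finite_measure_subalgebra_vimage) fact+
  have Z_int: "integrable P Z"
    by (intro integrable_const_bound[where B=1] AE_I2) (use Z_bin in auto)
  have "AE \<omega> in P. 0 \<le> Z \<omega>" using Z_bin by (auto intro!: AE_I2)
  then obtain q0 where q0: "cond_exp_version P X Z q0" "\<And>x. 0 \<le> q0 x"
    using cond_exp_version_exists[OF P X_meas Z_int] by blast
  \<comment> \<open>Truncation makes \<open>q\<close> a probability weight everywhere; by overlap it changes nothing a.e.\<close>
  define q where "q x = min 1 (q0 x)" for x
  have [measurable]: "q0 \<in> borel_measurable borel"
    using q0(1) unfolding cond_exp_version_def by simp
  then have q_meas [measurable]: "q \<in> borel_measurable borel"
    unfolding q_def[abs_def] by measurable
  have ce_Z: "AE \<omega> in P. real_cond_exp P (vimage_algebra (space P) X borel) Z \<omega> = q (X \<omega>)"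
    using real_cond_exp_cond_exp_version[OF P q0(1) Z_int] overlap
    by eventually_elim (auto simp: q_def)
  have "AE \<omega> in P. 0 < q (X \<omega>) \<and> q (X \<omega>) < 1"
    using ce_Z overlap by eventually_elim simp
  moreover have "0 \<le> q x \<and> q x \<le> 1" for x
    using q0(2)[of x] by (simp add: q_def)
  moreover have "AE \<omega> in P. real_cond_exp P (vimage_algebra (space P) X borel)
      (\<lambda>\<omega>. indicator {1} (Z \<omega>)) \<omega> = q (X \<omega>)"
    using S.real_cond_exp_indicator_binary(1)[OF Z_meas Z_bin] ce_Z by eventually_elim simp
  moreover have "AE \<omega> in P. real_cond_exp P (vimage_algebra (space P) X borel)
      (\<lambda>\<omega>. indicator {0} (Z \<omega>)) \<omega> = 1 - q (X \<omega>)"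
    using S.real_cond_exp_indicator_binary(2)[OF Z_meas Z_bin] ce_Z by eventually_elim simp
  ultimately show ?thesis
    using that[OF q_meas] by simp
qed

lemma cond_indep_comp:
  fixes Z :: "'a \<Rightarrow> 'z::topological_space"
  assumes ci: "cond_indep P X Z W" and g: "g \<in> borel_measurable (borel :: 'w::topological_space measure)"
  shows "cond_indep P X Z (\<lambda>\<omega>. (g (W \<omega>) :: 'v::topological_space))"
  unfolding cond_indep_def
proof (intro ballI)
  fix C :: "'z set" and B :: "'v set" assume C: "C \<in> sets borel" and B: "B \<in> sets borel"
  have "g -` B \<in> sets borel" using measurable_sets[OF g B] by simp
  with C ci show "AE \<omega> in P.
      real_cond_exp P (vimage_algebra (space P) X borel) (\<lambda>\<eta>. indicator C (Z \<eta>) * indicator B (g (W \<eta>))) \<omega> =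
      real_cond_exp P (vimage_algebra (space P) X borel) (\<lambda>\<eta>. indicator C (Z \<eta>)) \<omega> *
      real_cond_exp P (vimage_algebra (space P) X borel) (\<lambda>\<eta>. indicator B (g (W \<eta>))) \<omega>"
    unfolding cond_indep_def indicator_vimage[symmetric] by blast
qed

lemma cond_indep_integral_rectangle:
  fixes X :: "'a \<Rightarrow> 'b::second_countable_topology" and Z :: "'a \<Rightarrow> 'z::topological_space"
    and W :: "'a \<Rightarrow> 'w::topological_space"
  assumes P: "prob_space P" and [measurable]: "X \<in> measurable P borel" "Z \<in> measurable P borel"
      "W \<in> measurable P borel"
    and ci: "cond_indep P X Z W" and [measurable]: "q \<in> borel_measurable borel"
    and pq: "AE \<omega> in P. real_cond_exp P (vimage_algebra (space P) X borel) (\<lambda>\<omega>. indicator C (Z \<omega>)) \<omega> = q (X \<omega>)"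
    and [measurable]: "C \<in> sets borel" "A \<in> sets borel" "B \<in> sets borel"
  shows "(\<integral>\<omega>. indicator C (Z \<omega>) * (indicator A (X \<omega>) * indicator B (W \<omega>)) \<partial>P) =
         (\<integral>\<omega>. q (X \<omega>) * (indicator A (X \<omega>) * indicator B (W \<omega>)) \<partial>P)"
proof -
  interpret prob_space P by fact
  interpret S: finite_measure_subalgebra P "vimage_algebra (space P) X borel"
    by (rule finite_measure_subalgebra_vimage) fact+
  let ?ce = "real_cond_exp P (vimage_algebra (space P) X borel)"
  have indA: "(\<lambda>\<omega>. indicator A (X \<omega>) :: real) \<in> borel_measurable (vimage_algebra (space P) X borel)"
    by (rule borel_measurable_vimage_algebra_comp) simp
  have ceC: "integrable P (?ce (\<lambda>\<omega>. indicator C (Z \<omega>)))"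
    by (intro S.real_cond_exp_int(1) integrable_const_bound[where B=1]) simp_all
  have "(\<integral>\<omega>. indicator C (Z \<omega>) * (indicator A (X \<omega>) * indicator B (W \<omega>)) \<partial>P) =
      (\<integral>\<omega>. indicator A (X \<omega>) * (indicator C (Z \<omega>) * indicator B (W \<omega>) :: real) \<partial>P)"
    by (simp add: mult_ac)
  also have "\<dots> = (\<integral>\<omega>. indicator A (X \<omega>) * ?ce (\<lambda>\<eta>. indicator C (Z \<eta>) * indicator B (W \<eta>)) \<omega> \<partial>P)"
    by (rule S.real_cond_exp_intg(2)[symmetric, OF _ indA])
      (auto intro!: integrable_const_bound[where B=1] simp: indicator_def)
  also have "\<dots> = (\<integral>\<omega>. (indicator A (X \<omega>) * ?ce (\<lambda>\<eta>. indicator C (Z \<eta>)) \<omega>) * ?ce (\<lambda>\<eta>. indicator B (W \<eta>)) \<omega> \<partial>P)"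
  proof (rule integral_cong_AE)
    have "AE \<omega> in P. ?ce (\<lambda>\<eta>. indicator C (Z \<eta>) * indicator B (W \<eta>)) \<omega> =
        ?ce (\<lambda>\<eta>. indicator C (Z \<eta>)) \<omega> * ?ce (\<lambda>\<eta>. indicator B (W \<eta>)) \<omega>"
      using ci unfolding cond_indep_def by simp
    then show "AE \<omega> in P. indicator A (X \<omega>) * ?ce (\<lambda>\<eta>. indicator C (Z \<eta>) * indicator B (W \<eta>)) \<omega> =
        (indicator A (X \<omega>) * ?ce (\<lambda>\<eta>. indicator C (Z \<eta>)) \<omega>) * ?ce (\<lambda>\<eta>. indicator B (W \<eta>)) \<omega>"
      by eventually_elim simp
  qed simp_all
  also have "\<dots> = (\<integral>\<omega>. (indicator A (X \<omega>) * ?ce (\<lambda>\<eta>. indicator C (Z \<eta>)) \<omega>) * indicator B (W \<omega>) \<partial>P)"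
  proof (rule S.real_cond_exp_intg(2))
    have "integrable P (\<lambda>\<omega>. (indicator A (X \<omega>) * indicator B (W \<omega>)) * ?ce (\<lambda>\<eta>. indicator C (Z \<eta>)) \<omega>)"
      by (rule integrable_mult_bounded[OF ceC, where C=1]) (auto simp: indicator_def)
    then show "integrable P (\<lambda>\<omega>. indicator A (X \<omega>) * ?ce (\<lambda>\<eta>. indicator C (Z \<eta>)) \<omega> * indicator B (W \<omega>))"
      by (simp add: mult_ac)
    show "(\<lambda>\<omega>. indicator A (X \<omega>) * ?ce (\<lambda>\<eta>. indicator C (Z \<eta>)) \<omega>) \<in> borel_measurable (vimage_algebra (space P) X borel)"
      using indA by simp
  qed simp
  also have "\<dots> = (\<integral>\<omega>. q (X \<omega>) * (indicator A (X \<omega>) * indicator B (W \<omega>)) \<partial>P)"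
    using pq by (intro integral_cong_AE) (auto simp: mult_ac)
  finally show ?thesis .
qed

lemma cond_indep_reweighted_distr:
  fixes X :: "'a \<Rightarrow> 'b::second_countable_topology" and Z :: "'a \<Rightarrow> 'z::topological_space"
    and W :: "'a \<Rightarrow> 'w::second_countable_topology"
  assumes P: "prob_space P" and [measurable]: "X \<in> measurable P borel" "Z \<in> measurable P borel"
      "W \<in> measurable P borel"
    and ci: "cond_indep P X Z W"
    and [measurable]: "q \<in> borel_measurable borel" and q: "\<And>x. 0 \<le> q x \<and> q x \<le> 1"
    and pq: "AE \<omega> in P. real_cond_exp P (vimage_algebra (space P) X borel) (\<lambda>\<omega>. indicator C (Z \<omega>)) \<omega> = q (X \<omega>)"
    and [measurable]: "C \<in> sets borel"
  shows "reweighted_distr P (\<lambda>\<omega>. indicator C (Z \<omega>)) (\<lambda>\<omega>. (X \<omega>, W \<omega>)) =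
    reweighted_distr P (\<lambda>\<omega>. q (X \<omega>)) (\<lambda>\<omega>. (X \<omega>, W \<omega>))"
proof -
  interpret prob_space P by fact
  show ?thesis
  proof (rule reweighted_distr_eqI_rectangles)
    show "integrable P (\<lambda>\<omega>. indicator C (Z \<omega>) :: real)" "integrable P (\<lambda>\<omega>. q (X \<omega>))"
      using q by (auto intro!: integrable_const_bound[where B=1])
  qed (use q cond_indep_integral_rectangle[OF P _ _ _ ci _ pq] in simp_all)
qed

lemma borel_measurable_cond_cdf:
  fixes f :: "'b::second_countable_topology \<Rightarrow> real \<Rightarrow> real"
  assumes [measurable]: "(\<lambda>p. f (fst p) (snd p)) \<in> borel_measurable borel"
  shows "(\<lambda>p. cond_cdf f (fst p) (snd p)) \<in> borel_measurable borel"
proof -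
  have "{q \<in> space borel. snd q \<le> snd (fst q)} \<in> sets (borel :: (('b \<times> real) \<times> real) measure)"
    by (rule borel_measurable_le; measurable)
  moreover have "(\<lambda>q. (fst (fst q), snd q)) \<in> borel_measurable (borel :: (('b \<times> real) \<times> real) measure)"
    by measurable
  from measurable_compose[OF this assms]
  have "(\<lambda>q. f (fst (fst q)) (snd q)) \<in> borel_measurable (borel :: (('b \<times> real) \<times> real) measure)"
    by simp
  ultimately have "(\<lambda>q. indicator {q \<in> space borel. snd q \<le> snd (fst q)} q * f (fst (fst q)) (snd q))
      \<in> borel_measurable (borel :: (('b \<times> real) \<times> real) measure)"
    by measurable
  from borel_measurable_integral_slice[OF this] show ?thesis
    by (simp add: cond_cdf_def indicator_def)
qed

lemma borel_measurable_copula_e: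
  fixes f1 f0 :: "'b::second_countable_topology \<Rightarrow> real \<Rightarrow> real"
  assumes c: "(\<lambda>(s, t). c s t) \<in> borel_measurable borel"
    and f1: "(\<lambda>p. f1 (fst p) (snd p)) \<in> borel_measurable borel"
    and f0: "(\<lambda>p. f0 (fst p) (snd p)) \<in> borel_measurable borel"
  shows "(\<lambda>p. copula_e c f1 f0 (fst p) (snd p)) \<in> borel_measurable borel"
proof -
  have pr1: "(\<lambda>p::'b \<times> real \<times> real. (fst p, fst (snd p))) \<in> borel_measurable borel"
    and pr0: "(\<lambda>p::'b \<times> real \<times> real. (fst p, snd (snd p))) \<in> borel_measurable borel"
    by measurable measurable
  have F1: "(\<lambda>p::'b \<times> real \<times> real. cond_cdf f1 (fst p) (fst (snd p))) \<in> borel_measurable borel"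
      "(\<lambda>p::'b \<times> real \<times> real. f1 (fst p) (fst (snd p))) \<in> borel_measurable borel"
    using measurable_compose[OF pr1 borel_measurable_cond_cdf[OF f1]] measurable_compose[OF pr1 f1]
    by simp_all
  have F0: "(\<lambda>p::'b \<times> real \<times> real. cond_cdf f0 (fst p) (snd (snd p))) \<in> borel_measurable borel"
      "(\<lambda>p::'b \<times> real \<times> real. f0 (fst p) (snd (snd p))) \<in> borel_measurable borel"
    using measurable_compose[OF pr0 borel_measurable_cond_cdf[OF f0]] measurable_compose[OF pr0 f0]
    by simp_all
  have "(\<lambda>p. c (cond_cdf f1 (fst p) (fst (snd p))) (cond_cdf f0 (fst p) (snd (snd p))))
      \<in> borel_measurable borel"
    using measurable_compose[OF borel_measurable_Pair[OF F1(1) F0(1)] c] by simp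
  then show ?thesis
    unfolding copula_e_def by (intro borel_measurable_times F1(2) F0(2))
qed

lemma copula_e_AE_cong:
  fixes g1 f1 g0 f0 :: "'b::second_countable_topology \<Rightarrow> real \<Rightarrow> real"
  assumes "(\<lambda>p. g1 (fst p) (snd p)) \<in> borel_measurable borel" "(\<lambda>p. f1 (fst p) (snd p)) \<in> borel_measurable borel"
    and "(\<lambda>p. g0 (fst p) (snd p)) \<in> borel_measurable borel" "(\<lambda>p. f0 (fst p) (snd p)) \<in> borel_measurable borel"
    and ae: "AE m in lborel. g1 x m = f1 x m" "AE m in lborel. g0 x m = f0 x m"
  shows "AE u in (lborel :: (real \<times> real) measure). copula_e c g1 g0 x u = copula_e c f1 f0 x u"
proof -
  have [measurable]: "g1 x \<in> borel_measurable lborel" "f1 x \<in> borel_measurable lborel"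
      "g0 x \<in> borel_measurable lborel" "f0 x \<in> borel_measurable lborel"
    using assms(1-4)[THEN borel_measurable_slice, of x] by simp_all
  have cdf: "cond_cdf g1 x = cond_cdf f1 x" "cond_cdf g0 x = cond_cdf f0 x"
    unfolding cond_cdf_def fun_eq_iff using ae by (auto intro!: integral_cong_AE)
  have "AE u in lborel \<Otimes>\<^sub>M lborel. g1 x (fst u) = f1 x (fst u) \<and> g0 x (snd u) = f0 x (snd u)"
  proof (rule lborel_pair.AE_pair_measure)
    show "{u \<in> space (lborel \<Otimes>\<^sub>M lborel). g1 x (fst u) = f1 x (fst u) \<and> g0 x (snd u) = f0 x (snd u)}
        \<in> sets (lborel \<Otimes>\<^sub>M lborel)"
      by measurable
    show "AE a in lborel. AE b in lborel. g1 x (fst (a, b)) = f1 x (fst (a, b)) \<and> g0 x (snd (a, b)) = f0 x (snd (a, b))"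
      using ae(1) by eventually_elim (use ae(2) in simp)
  qed
  then show ?thesis
    unfolding lborel_prod by eventually_elim (simp add: copula_e_def cdf)
qed

lemma borel_measurable_kern_u:
  assumes "kernel2 K"
  shows "kern_u K h ustar \<in> borel_measurable borel"
proof -
  have "(\<lambda>(a, b). K a b) \<in> borel_measurable borel" using assms unfolding kernel2_def by simp
  from measurable_compose[OF _ this, of "\<lambda>u. ((fst u - fst ustar) / h, (snd u - snd ustar) / h)"]
  have "(\<lambda>u. K ((fst u - fst ustar) / h) ((snd u - snd ustar) / h)) \<in> borel_measurable (borel :: (real \<times> real) measure)"
    by simp
  then show ?thesis unfolding kern_u_def[abs_def] by measurable
qed

lemma kern_u_bounded:
  assumes "kernel2 K"
  obtains C where "\<And>u. \<bar>kern_u K h ustar u\<bar> \<le> C"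
proof -
  obtain B where "\<And>a b. \<bar>K a b\<bar> \<le> B" using assms unfolding kernel2_def by auto
  then have "\<bar>kern_u K h ustar u\<bar> \<le> B / h\<^sup>2" for u
    unfolding kern_u_def by (simp add: abs_div divide_right_mono)
  then show ?thesis using that by blast
qed

text \<open>Arm \<open>z\<close> of a binary experiment: \<open>Mo\<close>, \<open>Yo\<close> are the observed mediator and outcome, \<open>Mt\<close>,
  \<open>Yt\<close> the potential ones \<open>M\<^sub>z\<close>, \<open>Y\<^sub>z\<close>, and \<open>p\<close> is the propensity of the arm.\<close>

locale treatment_arm = prob_space P
  for P :: "'a measure" and X :: "'a \<Rightarrow> 'b::second_countable_topology"
    and Z Mo Yo Mt Yt :: "'a \<Rightarrow> real" and p :: "'b \<Rightarrow> real" and z :: real +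
  assumes X_meas [measurable]: "X \<in> measurable P borel"
    and Z_meas [measurable]: "Z \<in> borel_measurable P"
    and Mt_meas [measurable]: "Mt \<in> borel_measurable P"
    and Yt_int: "integrable P Yt"
    and observed: "\<And>\<omega>. \<omega> \<in> space P \<Longrightarrow> Z \<omega> = z \<Longrightarrow> Mo \<omega> = Mt \<omega> \<and> Yo \<omega> = Yt \<omega>"
    and p_meas [measurable]: "p \<in> borel_measurable borel"
    and p_bounded: "\<And>x. 0 \<le> p x \<and> p x \<le> 1"
    and p_pos: "AE \<omega> in P. 0 < p (X \<omega>)"
    and propensity: "AE \<omega> in P.
      real_cond_exp P (vimage_algebra (space P) X borel) (\<lambda>\<omega>. indicator {z} (Z \<omega>)) \<omega> = p (X \<omega>)"
    and unconfounded: "cond_indep P X Z (\<lambda>\<omega>. (Mt \<omega>, Yt \<omega>))"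
begin

lemma Yt_meas [measurable]: "Yt \<in> borel_measurable P"
  using Yt_int by auto

lemma arm_law:
  "reweighted_distr P (\<lambda>\<omega>. indicator {z} (Z \<omega>)) (\<lambda>\<omega>. (X \<omega>, Mt \<omega>, Yt \<omega>)) =
   reweighted_distr P (\<lambda>\<omega>. p (X \<omega>)) (\<lambda>\<omega>. (X \<omega>, Mt \<omega>, Yt \<omega>))"
  by (rule cond_indep_reweighted_distr[OF prob_space_axioms _ _ _ unconfounded p_meas p_bounded propensity])
    simp_all

lemma arm_law_pair:
  "reweighted_distr P (\<lambda>\<omega>. indicator {z} (Z \<omega>)) (\<lambda>\<omega>. (X \<omega>, Mt \<omega>)) =
   reweighted_distr P (\<lambda>\<omega>. p (X \<omega>)) (\<lambda>\<omega>. (X \<omega>, Mt \<omega>))"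
  using reweighted_distr_comp[OF arm_law _ , of "\<lambda>t. (fst t, fst (snd t))"] by simp

lemma integral_arm:
  assumes [measurable]: "h \<in> borel_measurable borel"
  shows "(\<integral>\<omega>. indicator {z} (Z \<omega>) * h (X \<omega>, Mt \<omega>, Yt \<omega>) \<partial>P) = (\<integral>\<omega>. p (X \<omega>) * h (X \<omega>, Mt \<omega>, Yt \<omega>) \<partial>P)"
  using arg_cong[OF arm_law, of "\<lambda>M. integral\<^sup>L M h"] p_bounded
  by (simp add: integral_reweighted_distr)

lemma nn_integral_arm:
  assumes [measurable]: "h \<in> borel_measurable borel"
  shows "(\<integral>\<^sup>+\<omega>. ennreal (indicator {z} (Z \<omega>)) * h (X \<omega>) \<partial>P) = (\<integral>\<^sup>+\<omega>. ennreal (p (X \<omega>)) * h (X \<omega>) \<partial>P)"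
  using arg_cong[OF arm_law, of "\<lambda>M. integral\<^sup>N M (\<lambda>t. h (fst t))"]
  by (simp add: nn_integral_reweighted_distr)

lemma cond_exp_version_restrict_arm:
  assumes mu: "cond_exp_version P (\<lambda>\<omega>. (X \<omega>, Z \<omega>, Mo \<omega>)) Yo mu" and [measurable]: "S \<in> sets borel"
  shows "(\<integral>\<omega>. indicator {z} (Z \<omega>) * (indicator S (X \<omega>, Mt \<omega>) * Yt \<omega>) \<partial>P) =
    (\<integral>\<omega>. indicator {z} (Z \<omega>) * (indicator S (X \<omega>, Mt \<omega>) * mu (X \<omega>, z, Mt \<omega>)) \<partial>P)"
proof -
  let ?S = "{t :: 'b \<times> real \<times> real. fst (snd t) = z \<and> (fst t, snd (snd t)) \<in> S}"
  have S': "?S \<in> sets borel" by measurable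
  have "(\<integral>\<omega>. indicator {z} (Z \<omega>) * (indicator S (X \<omega>, Mt \<omega>) * Yt \<omega>) \<partial>P) =
      (\<integral>\<omega>. indicator ?S (X \<omega>, Z \<omega>, Mo \<omega>) * Yo \<omega> \<partial>P)"
    using observed by (intro Bochner_Integration.integral_cong) (auto simp: indicator_def)
  also have "\<dots> = (\<integral>\<omega>. indicator ?S (X \<omega>, Z \<omega>, Mo \<omega>) * mu (X \<omega>, Z \<omega>, Mo \<omega>) \<partial>P)"
    using mu S' unfolding cond_exp_version_def by blast
  also have "\<dots> = (\<integral>\<omega>. indicator {z} (Z \<omega>) * (indicator S (X \<omega>, Mt \<omega>) * mu (X \<omega>, z, Mt \<omega>)) \<partial>P)"
    using observed by (intro Bochner_Integration.integral_cong) (auto simp: indicator_def)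
  finally show ?thesis .
qed

lemma integral_arm_cond_exp_version:
  assumes mu: "cond_exp_version P (\<lambda>\<omega>. (X \<omega>, Z \<omega>, Mo \<omega>)) Yo mu"
    and g: "cond_exp_version P (\<lambda>\<omega>. (X \<omega>, Mt \<omega>)) Yt g" and [measurable]: "S \<in> sets borel"
  shows "(\<integral>\<omega>. indicator {z} (Z \<omega>) * (indicator S (X \<omega>, Mt \<omega>) * mu (X \<omega>, z, Mt \<omega>)) \<partial>P) =
    (\<integral>\<omega>. indicator {z} (Z \<omega>) * (indicator S (X \<omega>, Mt \<omega>) * g (X \<omega>, Mt \<omega>)) \<partial>P)"
proof -
  have [measurable]: "g \<in> borel_measurable borel" using g unfolding cond_exp_version_def by simp
  have "(\<integral>\<omega>. indicator {z} (Z \<omega>) * (indicator S (X \<omega>, Mt \<omega>) * mu (X \<omega>, z, Mt \<omega>)) \<partial>P) =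
      (\<integral>\<omega>. indicator {z} (Z \<omega>) * (indicator S (X \<omega>, Mt \<omega>) * Yt \<omega>) \<partial>P)"
    by (rule cond_exp_version_restrict_arm[OF mu, symmetric]) simp
  also have "\<dots> = (\<integral>\<omega>. p (X \<omega>) * (indicator S (X \<omega>, Mt \<omega>) * Yt \<omega>) \<partial>P)"
    using integral_arm[of "\<lambda>t. indicator S (fst t, fst (snd t)) * snd (snd t)"] by simp
  also have "\<dots> = (\<integral>\<omega>. (p (X \<omega>) * indicator S (X \<omega>, Mt \<omega>)) * g (X \<omega>, Mt \<omega>) \<partial>P)"
    using cond_exp_version_integral[OF prob_space_axioms g Yt_int, of "\<lambda>v. p (fst v) * indicator S v" 1]
      p_bounded by (simp add: mult_ac abs_le_iff indicator_def)
  also have "\<dots> = (\<integral>\<omega>. indicator {z} (Z \<omega>) * (indicator S (X \<omega>, Mt \<omega>) * g (X \<omega>, Mt \<omega>)) \<partial>P)"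
    using integral_arm[of "\<lambda>t. indicator S (fst t, fst (snd t)) * g (fst t, fst (snd t))"]
    by (simp add: mult_ac)
  finally show ?thesis .
qed

text \<open>Within the arm, \<open>mu\<close> and \<open>g\<close> are both versions of the conditional expectation of \<open>Yt\<close> given
  \<open>(X, Mt)\<close>; unconfoundedness moves this from the arm to the whole population wherever the
  propensity is positive.\<close>

lemma cond_exp_arm_eq:
  assumes mu: "cond_exp_version P (\<lambda>\<omega>. (X \<omega>, Z \<omega>, Mo \<omega>)) Yo mu"
    and g: "cond_exp_version P (\<lambda>\<omega>. (X \<omega>, Mt \<omega>)) Yt g"
  shows "AE \<omega> in P. mu (X \<omega>, z, Mt \<omega>) = g (X \<omega>, Mt \<omega>)"
proof -
  have [measurable]: "mu \<in> borel_measurable borel" "g \<in> borel_measurable borel"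
    and mu_int: "integrable P (\<lambda>\<omega>. mu (X \<omega>, Z \<omega>, Mo \<omega>))" and g_int: "integrable P (\<lambda>\<omega>. g (X \<omega>, Mt \<omega>))"
    using mu g unfolding cond_exp_version_def by simp_all
  define m where "m v = mu (fst v, z, snd v)" for v
  have [measurable]: "m \<in> borel_measurable borel" unfolding m_def[abs_def] by measurable
  let ?Q = "reweighted_distr P (\<lambda>\<omega>. indicator {z} (Z \<omega>)) (\<lambda>\<omega>. (X \<omega>, Mt \<omega>))"
  have Q_integral: "(\<integral>v. f v \<partial>?Q) = (\<integral>\<omega>. indicator {z} (Z \<omega>) * f (X \<omega>, Mt \<omega>) \<partial>P)"
    and Q_integrable: "integrable ?Q f \<longleftrightarrow> integrable P (\<lambda>\<omega>. indicator {z} (Z \<omega>) * f (X \<omega>, Mt \<omega>))"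
    if [measurable]: "f \<in> borel_measurable borel" for f :: "'b \<times> real \<Rightarrow> real"
    by (simp_all add: integral_reweighted_distr integrable_reweighted_distr_iff)
  have "AE v in ?Q. m v = g v"
  proof (rule density_unique_real)
    have "integrable P (\<lambda>\<omega>. indicator {z} (Z \<omega>) * mu (X \<omega>, Z \<omega>, Mo \<omega>))"
      by (rule integrable_mult_bounded[OF mu_int, where C=1]) simp_all
    moreover have "indicator {z} (Z \<omega>) * mu (X \<omega>, Z \<omega>, Mo \<omega>) = indicator {z} (Z \<omega>) * m (X \<omega>, Mt \<omega>)"
      if "\<omega> \<in> space P" for \<omega>
      using observed[OF that] by (auto simp: m_def indicator_def)
    ultimately show "integrable ?Q m"
      by (simp add: Q_integrable cong: Bochner_Integration.integrable_cong)
    show "integrable ?Q g"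
      by (simp add: Q_integrable integrable_mult_bounded[OF g_int, where C=1])
    fix S assume "S \<in> sets ?Q"
    then show "(\<integral>v\<in>S. m v \<partial>?Q) = (\<integral>v\<in>S. g v \<partial>?Q)"
      using integral_arm_cond_exp_version[OF mu g]
      unfolding set_lebesgue_integral_def by (simp add: Q_integral m_def)
  qed
  then have "AE v in reweighted_distr P (\<lambda>\<omega>. p (X \<omega>)) (\<lambda>\<omega>. (X \<omega>, Mt \<omega>)). m v = g v"
    unfolding arm_law_pair .
  then have "AE \<omega> in P. 0 < p (X \<omega>) \<longrightarrow> m (X \<omega>, Mt \<omega>) = g (X \<omega>, Mt \<omega>)"
    by (rule AE_reweighted_distrD) simp_all
  then show ?thesis
    using p_pos by eventually_elim (simp add: m_def)
qed

lemma integrable_cond_exp_arm: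
  assumes mu: "cond_exp_version P (\<lambda>\<omega>. (X \<omega>, Z \<omega>, Mo \<omega>)) Yo mu"
    and g: "cond_exp_version P (\<lambda>\<omega>. (X \<omega>, Mt \<omega>)) Yt g"
  shows "integrable P (\<lambda>\<omega>. mu (X \<omega>, z, Mt \<omega>))"
proof -
  have [measurable]: "mu \<in> borel_measurable borel" "g \<in> borel_measurable borel"
    and "integrable P (\<lambda>\<omega>. g (X \<omega>, Mt \<omega>))"
    using mu g unfolding cond_exp_version_def by simp_all
  then show ?thesis
    using cond_exp_arm_eq[OF mu g] by (subst integrable_cong_AE) simp_all
qed

lemma reweighted_distr_arm_cond_density:
  assumes fobs: "cond_density_version P (\<lambda>\<omega>. (X \<omega>, Z \<omega>)) Mo fobs"
  shows "reweighted_distr P (\<lambda>\<omega>. indicator {z} (Z \<omega>)) (\<lambda>\<omega>. (X \<omega>, Mo \<omega>)) =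
    density (distr P borel X \<Otimes>\<^sub>M lborel) (\<lambda>v. ennreal (p (fst v) * fobs (fst v, z) (snd v)))"
proof (rule measure_eqI)
  note [measurable] = cond_density_versionD(2,3)[OF fobs]
    borel_measurable_fix_snd_arg[OF cond_density_versionD(3)[OF fobs], of z]
  fix S assume "S \<in> sets (reweighted_distr P (\<lambda>\<omega>. indicator {z} (Z \<omega>)) (\<lambda>\<omega>. (X \<omega>, Mo \<omega>)))"
  then have [measurable]: "S \<in> sets borel" by simp
  define F where "F t = ennreal (fobs (fst t, z) (snd t)) * indicator S t" for t
  have F_meas [measurable]: "F \<in> borel_measurable borel" unfolding F_def[abs_def] by measurable
  define \<phi> where "\<phi> x = (\<integral>\<^sup>+m. F (x, m) \<partial>lborel)" for x
  have [measurable]: "\<phi> \<in> borel_measurable borel"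
    unfolding \<phi>_def[abs_def] by (rule borel_measurable_nn_integral_slice) simp
  have "emeasure (reweighted_distr P (\<lambda>\<omega>. indicator {z} (Z \<omega>)) (\<lambda>\<omega>. (X \<omega>, Mo \<omega>))) S =
      (\<integral>\<^sup>+\<omega>. ennreal (indicator {z} (snd (X \<omega>, Z \<omega>))) * indicator S (fst (X \<omega>, Z \<omega>), Mo \<omega>) \<partial>P)"
    by (simp add: emeasure_reweighted_distr)
  also have "\<dots> = (\<integral>\<^sup>+\<omega>. (\<integral>\<^sup>+m. ennreal (fobs (X \<omega>, Z \<omega>) m) *
      (ennreal (indicator {z} (Z \<omega>)) * indicator S (X \<omega>, m)) \<partial>lborel) \<partial>P)"
    using nn_integral_cond_density[OF prob_space_axioms fobs,
        of "\<lambda>t. ennreal (indicator {z} (snd (fst t))) * indicator S (fst (fst t), snd t)"]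
    by simp
  also have "\<dots> = (\<integral>\<^sup>+\<omega>. ennreal (indicator {z} (Z \<omega>)) * \<phi> (X \<omega>) \<partial>P)"
    by (intro nn_integral_cong) (simp add: \<phi>_def F_def indicator_def mult_ac)
  also have "\<dots> = (\<integral>\<^sup>+\<omega>. ennreal (p (X \<omega>)) * \<phi> (X \<omega>) \<partial>P)"
    by (rule nn_integral_arm) simp
  also have "\<dots> = (\<integral>\<^sup>+x. ennreal (p x) * \<phi> x \<partial>distr P borel X)"
    by (subst nn_integral_distr) simp_all
  also have "\<dots> = (\<integral>\<^sup>+x. (\<integral>\<^sup>+m. ennreal (p x * fobs (x, z) m) * indicator S (x, m) \<partial>lborel) \<partial>distr P borel X)"
    using p_bounded cond_density_versionD(4)[OF fobs] borel_measurable_slice[OF F_meas]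
    by (intro nn_integral_cong) (simp add: \<phi>_def F_def nn_integral_cmult[symmetric] ennreal_mult mult_ac)
  also have "\<dots> = emeasure (density (distr P borel X \<Otimes>\<^sub>M lborel)
      (\<lambda>v. ennreal (p (fst v) * fobs (fst v, z) (snd v)))) S"
    by (subst emeasure_density_pair_lborel) simp_all
  finally show "emeasure (reweighted_distr P (\<lambda>\<omega>. indicator {z} (Z \<omega>)) (\<lambda>\<omega>. (X \<omega>, Mo \<omega>))) S =
      emeasure (density (distr P borel X \<Otimes>\<^sub>M lborel) (\<lambda>v. ennreal (p (fst v) * fobs (fst v, z) (snd v)))) S" .
qed (simp only: sets_reweighted_distr sets_density, rule sets_pair_lborel_borel[symmetric], simp)

text \<open>The law of \<open>(X, Mo)\<close> on the arm has density \<open>p x * fobs (x, z) m\<close>. As \<open>Mo = Mt\<close> on the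
  arm, unconfoundedness turns it into the \<open>p\<close>-weighted law of \<open>(X, Mt)\<close>, whose density is
  \<open>p x * fMt x m\<close>; positivity of \<open>p\<close> cancels the weight.\<close>

lemma cond_density_arm_eq:
  assumes fobs: "cond_density_version P (\<lambda>\<omega>. (X \<omega>, Z \<omega>)) Mo fobs"
    and fMt: "cond_density_version P X Mt fMt"
  shows "AE \<omega> in P. AE m in lborel. fobs (X \<omega>, z) m = fMt (X \<omega>) m"
proof -
  note [measurable] = cond_density_versionD(2,3)[OF fobs] cond_density_versionD(3)[OF fMt]
    borel_measurable_fix_snd_arg[OF cond_density_versionD(3)[OF fobs], of z]
  let ?L = "distr P borel X"
  interpret L: prob_space ?L by (rule prob_space_distr) simp
  interpret PS: pair_sigma_finite ?L lborel ..
  have "density (?L \<Otimes>\<^sub>M lborel) (\<lambda>v. ennreal (p (fst v) * fobs (fst v, z) (snd v))) =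
      reweighted_distr P (\<lambda>\<omega>. indicator {z} (Z \<omega>)) (\<lambda>\<omega>. (X \<omega>, Mo \<omega>))"
    by (rule reweighted_distr_arm_cond_density[OF fobs, symmetric])
  also have "\<dots> = reweighted_distr P (\<lambda>\<omega>. indicator {z} (Z \<omega>)) (\<lambda>\<omega>. (X \<omega>, Mt \<omega>))"
    using observed by (intro reweighted_distr_cong) (auto simp: indicator_def split: if_splits)
  also have "\<dots> = reweighted_distr P (\<lambda>\<omega>. p (X \<omega>)) (\<lambda>\<omega>. (X \<omega>, Mt \<omega>))"
    by (rule arm_law_pair)
  also have "\<dots> = density (?L \<Otimes>\<^sub>M lborel) (\<lambda>v. ennreal (p (fst v) * fMt (fst v) (snd v)))"
    using p_bounded by (intro reweighted_distr_cond_density[OF prob_space_axioms fMt]) simp_all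
  finally have "AE v in ?L \<Otimes>\<^sub>M lborel.
      ennreal (p (fst v) * fobs (fst v, z) (snd v)) = ennreal (p (fst v) * fMt (fst v) (snd v))"
    by (intro PS.density_unique borel_measurable_pair_lborel) simp_all
  then have "AE x in ?L. AE m in lborel. ennreal (p x * fobs (x, z) m) = ennreal (p x * fMt x m)"
    by (auto dest: PS.AE_pair)
  then have "AE \<omega> in P. AE m in lborel. ennreal (p (X \<omega>) * fobs (X \<omega>, z) m) = ennreal (p (X \<omega>) * fMt (X \<omega>) m)"
    by (rule AE_distrD[OF X_meas])
  then show ?thesis
    using p_pos
  proof eventually_elim
    case (elim \<omega>)
    from elim(1) show ?case
    proof eventually_elim
      case (elim m)
      moreover have "0 \<le> p (X \<omega>) * fobs (X \<omega>, z) m" "0 \<le> p (X \<omega>) * fMt (X \<omega>) m"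
        using p_bounded cond_density_versionD(4)[OF fobs] cond_density_versionD(4)[OF fMt] by simp_all
      ultimately show ?case
        using \<open>0 < p (X \<omega>)\<close> by (simp add: ennreal_inj)
    qed
  qed
qed

end

lemma binary_treatment_arms:
  fixes X :: "'a \<Rightarrow> 'b::second_countable_topology" and Z M1 M0 Y1 Y0 :: "'a \<Rightarrow> real"
  defines "Mo \<equiv> \<lambda>\<omega>. Z \<omega> * M1 \<omega> + (1 - Z \<omega>) * M0 \<omega>" and "Yo \<equiv> \<lambda>\<omega>. Z \<omega> * Y1 \<omega> + (1 - Z \<omega>) * Y0 \<omega>"
  assumes P: "prob_space P" and X_meas [measurable]: "X \<in> measurable P borel"
    and Z_meas [measurable]: "Z \<in> borel_measurable P" and Z_bin: "\<forall>\<omega> \<in> space P. Z \<omega> \<in> {0, 1}"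
    and [measurable]: "M1 \<in> borel_measurable P" "M0 \<in> borel_measurable P"
    and Y1_int: "integrable P Y1" and Y0_int: "integrable P Y0"
    and overlap: "AE \<omega> in P. 0 < real_cond_exp P (vimage_algebra (space P) X borel) Z \<omega> \<and>
                              real_cond_exp P (vimage_algebra (space P) X borel) Z \<omega> < 1"
    and unconfounded: "cond_indep P X Z (\<lambda>\<omega>. (M0 \<omega>, M1 \<omega>, Y0 \<omega>, Y1 \<omega>))"
  obtains q where "treatment_arm P X Z Mo Yo M1 Y1 q 1" "treatment_arm P X Z Mo Yo M0 Y0 (\<lambda>x. 1 - q x) 0"
proof -
  interpret prob_space P by fact
  obtain q where q: "q \<in> borel_measurable borel" "\<And>x. 0 \<le> q x \<and> q x \<le> 1"
    "AE \<omega> in P. 0 < q (X \<omega>) \<and> q (X \<omega>) < 1"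
    "AE \<omega> in P. real_cond_exp P (vimage_algebra (space P) X borel) (\<lambda>\<omega>. indicator {1} (Z \<omega>)) \<omega> = q (X \<omega>)"
    "AE \<omega> in P. real_cond_exp P (vimage_algebra (space P) X borel) (\<lambda>\<omega>. indicator {0} (Z \<omega>)) \<omega> = 1 - q (X \<omega>)"
    using propensity_score[OF P X_meas Z_meas Z_bin overlap] by blast
  have "cond_indep P X Z (\<lambda>\<omega>. (M1 \<omega>, Y1 \<omega>))" "cond_indep P X Z (\<lambda>\<omega>. (M0 \<omega>, Y0 \<omega>))"
    using cond_indep_comp[OF unconfounded, of "\<lambda>t. (fst (snd t), snd (snd (snd t)))"]
      cond_indep_comp[OF unconfounded, of "\<lambda>t. (fst t, fst (snd (snd t)))"]
    by (simp_all add: measurable_pair_iff)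
  moreover have "AE \<omega> in P. 0 < q (X \<omega>)" "AE \<omega> in P. 0 < 1 - q (X \<omega>)"
    using q(3) by (eventually_elim, simp)+
  ultimately show ?thesis
    using q(1,2,4,5) Y1_int Y0_int by (intro that; unfold_locales) (simp_all add: Mo_def Yo_def)
qed

theorem theorem2:
  fixes P :: "'a measure"
    and X :: "'a \<Rightarrow> real ^ 'd" and Xset :: "(real ^ 'd) set"
    and Z M1 M0 Y1 Y0 :: "'a \<Rightarrow> real"
    and mu :: "(real ^ 'd) \<times> real \<times> real \<Rightarrow> real"
    and e :: "real ^ 'd \<Rightarrow> real \<times> real \<Rightarrow> real"
    and fM1 fM0 :: "real ^ 'd \<Rightarrow> real \<Rightarrow> real"
    and fobs :: "(real ^ 'd) \<times> real \<Rightarrow> real \<Rightarrow> real"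
    and c K :: "real \<Rightarrow> real \<Rightarrow> real"
    and h :: real and ustar :: "real \<times> real"
  assumes P: "prob_space P"
    and X_meas: "X \<in> measurable P borel" and X_in: "\<forall>\<omega> \<in> space P. X \<omega> \<in> Xset"
    and Z_meas: "Z \<in> borel_measurable P" and Z_bin: "\<forall>\<omega> \<in> space P. Z \<omega> \<in> {0, 1}"
    and M1_meas: "M1 \<in> borel_measurable P" and M0_meas: "M0 \<in> borel_measurable P"
    and Y1_int: "integrable P Y1" and Y0_int: "integrable P Y0"
    and overlap: "AE \<omega> in P. 0 < real_cond_exp P (vimage_algebra (space P) X borel) Z \<omega> \<and>
                              real_cond_exp P (vimage_algebra (space P) X borel) Z \<omega> < 1"
    and A1: "cond_indep P X Z (\<lambda>\<omega>. (M0 \<omega>, M1 \<omega>, Y0 \<omega>, Y1 \<omega>))"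
    and A2_1: "\<exists>g. cond_exp_version P (\<lambda>\<omega>. (X \<omega>, M1 \<omega>)) Y1 g \<and>
                   cond_exp_version P (\<lambda>\<omega>. (X \<omega>, M1 \<omega>, M0 \<omega>)) Y1 (\<lambda>(x, m1, m0). g (x, m1))"
    and A2_0: "\<exists>g. cond_exp_version P (\<lambda>\<omega>. (X \<omega>, M0 \<omega>)) Y0 g \<and>
                   cond_exp_version P (\<lambda>\<omega>. (X \<omega>, M1 \<omega>, M0 \<omega>)) Y0 (\<lambda>(x, m1, m0). g (x, m0))"
    and e_dens: "cond_density_version P X (\<lambda>\<omega>. (M1 \<omega>, M0 \<omega>)) e"
    and fM1_dens: "cond_density_version P X M1 fM1"
    and fM0_dens: "cond_density_version P X M0 fM0"
    and copula: "copula_density c"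
    and A3: "\<forall>x \<in> Xset. \<forall>u. e x u = copula_e c fM1 fM0 x u"
    and mu_def: "cond_exp_version P (\<lambda>\<omega>. (X \<omega>, Z \<omega>, Z \<omega> * M1 \<omega> + (1 - Z \<omega>) * M0 \<omega>))
                   (\<lambda>\<omega>. Z \<omega> * Y1 \<omega> + (1 - Z \<omega>) * Y0 \<omega>) mu"
    and fobs_dens: "cond_density_version P (\<lambda>\<omega>. (X \<omega>, Z \<omega>))
                      (\<lambda>\<omega>. Z \<omega> * M1 \<omega> + (1 - Z \<omega>) * M0 \<omega>) fobs"
    and K: "kernel2 K" and h: "h > 0"
  shows "(\<integral>\<omega>. (mu (X \<omega>, 1, M1 \<omega>) - mu (X \<omega>, 0, M0 \<omega>)) * kern_u K h ustar (M1 \<omega>, M0 \<omega>) \<partial>P)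
           / (\<integral>\<omega>. kern_u K h ustar (M1 \<omega>, M0 \<omega>) \<partial>P)
         = (\<integral>\<omega>. (\<integral>u. (mu (X \<omega>, 1, fst u) - mu (X \<omega>, 0, snd u))
                       * copula_e c (\<lambda>x. fobs (x, 1)) (\<lambda>x. fobs (x, 0)) (X \<omega>) u
                       * kern_u K h ustar u \<partial>lborel) \<partial>P)
           / (\<integral>\<omega>. (\<integral>u. copula_e c (\<lambda>x. fobs (x, 1)) (\<lambda>x. fobs (x, 0)) (X \<omega>) u
                       * kern_u K h ustar u \<partial>lborel) \<partial>P)"
proof -
  interpret prob_space P by (rule P)
  define Mo where "Mo \<omega> = Z \<omega> * M1 \<omega> + (1 - Z \<omega>) * M0 \<omega>" for \<omega>
  define Yo where "Yo \<omega> = Z \<omega> * Y1 \<omega> + (1 - Z \<omega>) * Y0 \<omega>" for \<omega>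
  obtain q where treated: "treatment_arm P X Z Mo Yo M1 Y1 q 1"
    and control: "treatment_arm P X Z Mo Yo M0 Y0 (\<lambda>x. 1 - q x) 0"
    using binary_treatment_arms[OF P X_meas Z_meas Z_bin M1_meas M0_meas Y1_int Y0_int overlap A1]
    unfolding Mo_def[abs_def] Yo_def[abs_def] by blast
  interpret arm1: treatment_arm P X Z Mo Yo M1 Y1 q 1 by (fact treated)
  interpret arm0: treatment_arm P X Z Mo Yo M0 Y0 "\<lambda>x. 1 - q x" 0 by (fact control)
  obtain g1 g0 where g1: "cond_exp_version P (\<lambda>\<omega>. (X \<omega>, M1 \<omega>)) Y1 g1"
    and g0: "cond_exp_version P (\<lambda>\<omega>. (X \<omega>, M0 \<omega>)) Y0 g0"
    using A2_1 A2_0 by blast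
  note mu_obs = mu_def[folded Mo_def Yo_def] and fobs_obs = fobs_dens[folded Mo_def]
  have fobs_meas: "(\<lambda>p. fobs (fst p, z) (snd p)) \<in> borel_measurable borel" for z
    by (rule borel_measurable_fix_snd_arg[OF cond_density_versionD(3)[OF fobs_obs]])
  have copula_meas: "(\<lambda>p. copula_e c (\<lambda>x. fobs (x, 1)) (\<lambda>x. fobs (x, 0)) (fst p) (snd p)) \<in> borel_measurable borel"
    using copula unfolding copula_density_def by (intro borel_measurable_copula_e fobs_meas) simp
  have copula_eq: "AE \<omega> in P. AE u in lborel. copula_e c (\<lambda>x. fobs (x, 1)) (\<lambda>x. fobs (x, 0)) (X \<omega>) u = e (X \<omega>) u"
    using arm1.cond_density_arm_eq[OF fobs_obs fM1_dens] arm0.cond_density_arm_eq[OF fobs_obs fM0_dens] AE_space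
  proof eventually_elim
    case (elim \<omega>)
    then have "e (X \<omega>) = copula_e c fM1 fM0 (X \<omega>)" using A3 X_in by auto
    with elim show ?case
      by (simp add: copula_e_AE_cong fobs_meas cond_density_versionD(3)[OF fM1_dens]
          cond_density_versionD(3)[OF fM0_dens])
  qed
  have [measurable]: "mu \<in> borel_measurable borel" using mu_def unfolding cond_exp_version_def by simp
  obtain C where C: "\<And>u. \<bar>kern_u K h ustar u\<bar> \<le> C" using kern_u_bounded[OF K] by blast
  have "integrable P (\<lambda>\<omega>. mu (X \<omega>, 1, M1 \<omega>) - mu (X \<omega>, 0, M0 \<omega>))"
    using arm1.integrable_cond_exp_arm[OF mu_obs g1] arm0.integrable_cond_exp_arm[OF mu_obs g0] by simp
  then show ?thesis
    using integral_ratio_cond_density_AE_cong[OF P e_dens copula_meas copula_eq _ _ borel_measurable_kern_u[OF K] C,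
        where G = "\<lambda>t. mu (fst t, 1, fst (snd t)) - mu (fst t, 0, snd (snd t))"]
    by simp
qed

end
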